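(* Let $\tilde L$ be a minimum-size counterexample. Then for every doubly irreducible element $x$ of $\tilde L$ there exists a doubly reducible element $y$ of $\tilde L$ with $x<y$.
   Context: For a poset $P$, $x$ upper covers $y$ (and $y$ lower covers $x$) if $y<x$ with nothing strictly between. Join-irreducible: upper covers exactly one element; meet-irreducible: lower covers exactly one element; doubly irreducible: both. Join-reducible: upper covers more than one element; meet-reducible: lower covers more than one element; doubly reducible: both. For $x\in P$, ${\uparrow}x=\{y: x\le y\}$. A counterexample is a finite lattice $L$ with $|L|>1$ in which every join-irreducible $j$ satisfies $|{\uparrow}j|>|L|/2$; a minimum-size counterexample is a counterexample $\tilde L$ such that no counterexample has fewer elements. *)

theory Defs
  imports "HOL-Algebra.Lattice"
begin

text \<open>Finite lattices are represented by HOL-Algebra structures L with carrier L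
  and order le L, satisfying the locale lattice (which entails partial_order,
  i.e. eq L is equality).\<close>

definition upper_covers :: "('a, 'b) gorder_scheme \<Rightarrow> 'a \<Rightarrow> 'a \<Rightarrow> bool" where
  "upper_covers L x y \<longleftrightarrow> x \<in> carrier L \<and> y \<in> carrier L \<and> y \<sqsubset>\<^bsub>L\<^esub> x \<and>
     \<not> (\<exists>z\<in>carrier L. y \<sqsubset>\<^bsub>L\<^esub> z \<and> z \<sqsubset>\<^bsub>L\<^esub> x)"

definition lower_covers_set :: "('a, 'b) gorder_scheme \<Rightarrow> 'a \<Rightarrow> 'a set" where
  "lower_covers_set L x = {y \<in> carrier L. upper_covers L x y}"

definition upper_covers_set :: "('a, 'b) gorder_scheme \<Rightarrow> 'a \<Rightarrow> 'a set" where
  "upper_covers_set L x = {y \<in> carrier L. upper_covers L y x}"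

definition join_irreducible :: "('a, 'b) gorder_scheme \<Rightarrow> 'a \<Rightarrow> bool" where
  "join_irreducible L x \<longleftrightarrow> x \<in> carrier L \<and> card (lower_covers_set L x) = 1"

definition meet_irreducible :: "('a, 'b) gorder_scheme \<Rightarrow> 'a \<Rightarrow> bool" where
  "meet_irreducible L x \<longleftrightarrow> x \<in> carrier L \<and> card (upper_covers_set L x) = 1"

definition doubly_irreducible :: "('a, 'b) gorder_scheme \<Rightarrow> 'a \<Rightarrow> bool" where
  "doubly_irreducible L x \<longleftrightarrow> join_irreducible L x \<and> meet_irreducible L x"

definition join_reducible :: "('a, 'b) gorder_scheme \<Rightarrow> 'a \<Rightarrow> bool" where
  "join_reducible L x \<longleftrightarrow> x \<in> carrier L \<and> card (lower_covers_set L x) > 1"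

definition meet_reducible :: "('a, 'b) gorder_scheme \<Rightarrow> 'a \<Rightarrow> bool" where
  "meet_reducible L x \<longleftrightarrow> x \<in> carrier L \<and> card (upper_covers_set L x) > 1"

definition doubly_reducible :: "('a, 'b) gorder_scheme \<Rightarrow> 'a \<Rightarrow> bool" where
  "doubly_reducible L x \<longleftrightarrow> join_reducible L x \<and> meet_reducible L x"

definition up_set :: "('a, 'b) gorder_scheme \<Rightarrow> 'a \<Rightarrow> 'a set" where
  "up_set L x = {y \<in> carrier L. x \<sqsubseteq>\<^bsub>L\<^esub> y}"

definition counterexample :: "('a, 'b) gorder_scheme \<Rightarrow> bool" where
  "counterexample L \<longleftrightarrow> lattice L \<and> finite (carrier L) \<and> card (carrier L) > 1 \<and>
     (\<forall>j. join_irreducible L j \<longrightarrow> 2 * card (up_set L j) > card (carrier L))"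

text \<open>Minimality is compared against all counterexamples whose carrier is a set of
  natural numbers; every finite lattice is isomorphic to such a one.\<close>
definition min_counterexample :: "('a, 'b) gorder_scheme \<Rightarrow> bool" where
  "min_counterexample L \<longleftrightarrow> counterexample L \<and>
     (\<forall>M :: nat gorder. counterexample M \<longrightarrow> card (carrier L) \<le> card (carrier M))"

end

theory Submission
  imports Defs
begin

text \<open>Let x be doubly irreducible in a minimum-size counterexample L, with unique upper cover b,
  and suppose no doubly reducible element lies above x. Removing x leaves a smaller lattice, which
  therefore is not a counterexample; the only join-irreducible element that can violate the bound
  there is b, so the filter of b has fewer than |L|/2 elements. Consequently no element above x is
  join-irreducible, so every element above x is join-reducible and hence has at most one upper
  cover, which forces the filter of x to be a chain. But in a counterexample the filter of a
  join-irreducible element is never a chain: if v is the largest non-top element of the chain and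
  j a join-irreducible element not below v, the filters of j and x meet only in the top and both
  miss the meet of j and x, so they cannot both contain more than half of L.\<close>


lemma (in partial_order) finite_ex_minimal:
  assumes "finite S" "S \<subseteq> carrier L" "S \<noteq> {}"
  shows "\<exists>m\<in>S. \<forall>s\<in>S. s \<sqsubseteq> m \<longrightarrow> s = m"
  using assms(1,3,2)
proof (induction S rule: finite_ne_induct)
  case (insert x S)
  then obtain m where m: "m \<in> S" "\<forall>s\<in>S. s \<sqsubseteq> m \<longrightarrow> s = m" by auto
  show ?case
  proof (cases "x \<sqsubseteq> m")
    case True
    have "s = x" if "s \<in> S" "s \<sqsubseteq> x" for s
    proof -
      have "s \<sqsubseteq> m" using that m(1) True insert.prems le_trans[of s x m] by auto
      then have "s = m" using that m by auto
      then show ?thesis using that True insert.prems m(1) by auto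
    qed
    then show ?thesis by auto
  next
    case False
    then show ?thesis using m insert.prems by auto
  qed
qed simp

lemma (in partial_order) finite_ex_maximal:
  assumes "finite S" "S \<subseteq> carrier L" "S \<noteq> {}"
  shows "\<exists>m\<in>S. \<forall>s\<in>S. m \<sqsubseteq> s \<longrightarrow> s = m"
  using partial_order.finite_ex_minimal[OF dual_order] assms by simp

lemma (in partial_order) lless_inv_gorder [simp]: "x \<sqsubset>\<^bsub>inv_gorder L\<^esub> y \<longleftrightarrow> y \<sqsubset> x"
  by (auto simp: lless_def eq_is_equal)

lemma (in partial_order) upper_covers_inv_gorder [simp]:
  "upper_covers (inv_gorder L) x y \<longleftrightarrow> upper_covers L y x"
  unfolding upper_covers_def by auto

lemma (in partial_order) covers_sets_inv_gorder [simp]: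
  "lower_covers_set (inv_gorder L) x = upper_covers_set L x"
  "upper_covers_set (inv_gorder L) x = lower_covers_set L x"
  unfolding lower_covers_set_def upper_covers_set_def by simp_all

lemma (in partial_order) irreducible_inv_gorder [simp]:
  "join_irreducible (inv_gorder L) x \<longleftrightarrow> meet_irreducible L x"
  "meet_irreducible (inv_gorder L) x \<longleftrightarrow> join_irreducible L x"
  unfolding join_irreducible_def meet_irreducible_def by simp_all

lemma (in lattice) lattice_restrict_carrier:
  assumes A: "A \<subseteq> carrier L"
    and join_closed: "\<And>y z. y \<in> A \<Longrightarrow> z \<in> A \<Longrightarrow> y \<squnion> z \<in> A"
    and meet_closed: "\<And>y z. y \<in> A \<Longrightarrow> z \<in> A \<Longrightarrow> y \<sqinter> z \<in> A"
  shows "lattice (L\<lparr>carrier := A\<rparr>)"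
proof -
  interpret R: weak_partial_order "L\<lparr>carrier := A\<rparr>"
    using weak_partial_order_subset[OF weak_partial_order_axioms A] .
  interpret R: partial_order "L\<lparr>carrier := A\<rparr>"
    by unfold_locales (simp add: eq_is_equal)
  show ?thesis
  proof unfold_locales
    fix y z assume "y \<in> carrier (L\<lparr>carrier := A\<rparr>)" "z \<in> carrier (L\<lparr>carrier := A\<rparr>)"
    then have yz: "y \<in> A" "z \<in> A" "y \<in> carrier L" "z \<in> carrier L" using A by auto
    show "\<exists>s. least (L\<lparr>carrier := A\<rparr>) s (Upper (L\<lparr>carrier := A\<rparr>) {y, z})"
      using yz join_closed[OF yz(1,2)] A
      by (intro exI[of _ "y \<squnion> z"]) (auto simp: least_def Upper_def join_left join_right intro: join_le)
    show "\<exists>s. greatest (L\<lparr>carrier := A\<rparr>) s (Lower (L\<lparr>carrier := A\<rparr>) {y, z})"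
      using yz meet_closed[OF yz(1,2)] A
      by (intro exI[of _ "y \<sqinter> z"]) (auto simp: greatest_def Lower_def meet_left meet_right intro: meet_le)
  qed
qed

locale finite_lattice = lattice +
  assumes finite_carrier: "finite (carrier L)"
begin

lemma dual_finite_lattice: "finite_lattice (inv_gorder L)"
  by (simp add: finite_lattice_def finite_lattice_axioms_def dual_lattice finite_carrier)

lemma ex_upper_cover_below:
  assumes "y \<in> carrier L" "z \<in> carrier L" "y \<sqsubset> z"
  shows "\<exists>w. upper_covers L w y \<and> w \<sqsubseteq> z"
proof -
  define S where "S = {w \<in> carrier L. y \<sqsubset> w \<and> w \<sqsubseteq> z}"
  have "finite S" "S \<subseteq> carrier L" "z \<in> S"
    using assms finite_carrier by (auto simp: S_def lless_eq)
  then obtain w where w: "w \<in> S" and min: "\<forall>s\<in>S. s \<sqsubseteq> w \<longrightarrow> s = w"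
    using finite_ex_minimal by blast
  have "\<not> (y \<sqsubset> u \<and> u \<sqsubset> w)" if "u \<in> carrier L" for u
    using that assms w min le_trans[of u w z] by (auto simp: S_def lless_eq)
  then show ?thesis using w assms(1) by (auto simp: S_def upper_covers_def)
qed

lemma ex_lower_cover_above:
  assumes "y \<in> carrier L" "z \<in> carrier L" "y \<sqsubset> z"
  shows "\<exists>c. upper_covers L z c \<and> y \<sqsubseteq> c"
  using finite_lattice.ex_upper_cover_below[OF dual_finite_lattice, of z y] assms by simp

lemma unique_upper_cover_le:
  assumes "upper_covers_set L x = {b}" "x \<in> carrier L" "z \<in> carrier L" "x \<sqsubset> z"
  shows "b \<sqsubseteq> z"
  using ex_upper_cover_below[OF assms(2-4)] assms(1) by (auto simp: upper_covers_set_def upper_covers_def)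

lemma le_unique_lower_cover:
  assumes "lower_covers_set L x = {a}" "x \<in> carrier L" "y \<in> carrier L" "y \<sqsubset> x"
  shows "y \<sqsubseteq> a"
  using finite_lattice.unique_upper_cover_le[OF dual_finite_lattice, of x a y] assms by simp

lemma join_irreducible_join_eq:
  assumes "join_irreducible L x" "y \<in> carrier L" "z \<in> carrier L" "y \<squnion> z = x"
  shows "y = x \<or> z = x"
proof (rule ccontr)
  assume "\<not> (y = x \<or> z = x)"
  obtain a where a: "lower_covers_set L x = {a}" and x: "x \<in> carrier L"
    using assms(1) card_1_singletonE unfolding join_irreducible_def by metis
  then have "a \<in> carrier L" "a \<sqsubset> x" by (auto simp: lower_covers_set_def upper_covers_def)
  moreover have "y \<sqsubset> x" "z \<sqsubset> x"
    using assms \<open>\<not> (y = x \<or> z = x)\<close> join_left join_right by (auto simp: lless_eq)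
  then have "y \<sqsubseteq> a" "z \<sqsubseteq> a" using le_unique_lower_cover[OF a x] assms by auto
  ultimately show False using assms join_le[of y a z] by (auto simp: lless_eq)
qed

lemma meet_irreducible_meet_eq:
  assumes "meet_irreducible L x" "y \<in> carrier L" "z \<in> carrier L" "y \<sqinter> z = x"
  shows "y = x \<or> z = x"
  using finite_lattice.join_irreducible_join_eq[OF dual_finite_lattice] assms by simp

lemma lattice_remove_doubly_irreducible:
  assumes "doubly_irreducible L x"
  shows "lattice (L\<lparr>carrier := carrier L - {x}\<rparr>)"
proof (rule lattice_restrict_carrier)
  fix y z assume yz: "y \<in> carrier L - {x}" "z \<in> carrier L - {x}"
  then show "y \<squnion> z \<in> carrier L - {x}"
    using join_irreducible_join_eq[of x y z] assms by (auto simp: doubly_irreducible_def)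
  show "y \<sqinter> z \<in> carrier L - {x}"
    using meet_irreducible_meet_eq[of x y z] yz assms by (auto simp: doubly_irreducible_def)
qed auto

lemma upper_covers_join_eq:
  assumes c: "upper_covers L w c" and c': "upper_covers L w c'" and "c \<noteq> c'"
  shows "c \<squnion> c' = w"
proof -
  have carr: "w \<in> carrier L" "c \<in> carrier L" "c' \<in> carrier L"
    using c c' by (auto simp: upper_covers_def)
  have le: "c \<sqsubseteq> c \<squnion> c'" "c' \<sqsubseteq> c \<squnion> c'" "c \<squnion> c' \<sqsubseteq> w"
    using carr c c' join_le by (auto simp: upper_covers_def lless_eq join_left join_right)
  have "c \<squnion> c' \<noteq> c"
  proof
    assume "c \<squnion> c' = c"
    then have "c' \<sqsubset> c" using le(2) \<open>c \<noteq> c'\<close> by (auto simp: lless_eq)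
    then show False using c c' by (auto simp: upper_covers_def)
  qed
  then show ?thesis using c le carr by (auto simp: upper_covers_def lless_eq)
qed

lemma ex_join_irreducible_le_not_le:
  assumes u: "u \<in> carrier L" and v: "v \<in> carrier L" and "\<not> u \<sqsubseteq> v"
  shows "\<exists>j. join_irreducible L j \<and> j \<sqsubseteq> u \<and> \<not> j \<sqsubseteq> v"
proof -
  define S where "S = {w \<in> carrier L. w \<sqsubseteq> u \<and> \<not> w \<sqsubseteq> v}"
  have "finite S" "S \<subseteq> carrier L" "u \<in> S" using assms finite_carrier by (auto simp: S_def)
  then obtain w where "w \<in> S" and min: "\<forall>s\<in>S. s \<sqsubseteq> w \<longrightarrow> s = w"
    using finite_ex_minimal by blast
  then have w: "w \<in> carrier L" "w \<sqsubseteq> u" "\<not> w \<sqsubseteq> v" by (auto simp: S_def)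
  have below_v: "c \<sqsubseteq> v" if "upper_covers L w c" for c
  proof (rule ccontr)
    assume "\<not> c \<sqsubseteq> v"
    have "c \<in> carrier L" "c \<sqsubseteq> w" "c \<noteq> w"
      using that by (auto simp: upper_covers_def lless_eq)
    then have "c \<in> S" using \<open>\<not> c \<sqsubseteq> v\<close> w u le_trans[of c w u] by (simp add: S_def)
    then show False using min \<open>c \<sqsubseteq> w\<close> \<open>c \<noteq> w\<close> by blast
  qed
  have "w \<sqinter> v \<noteq> w" using w v meet_right[of w v] by metis
  then have "w \<sqinter> v \<sqsubset> w" using w v meet_left by (simp add: lless_eq)
  then obtain c where c: "upper_covers L w c"
    using ex_lower_cover_above[OF meet_closed[OF w(1) v] w(1)] by blast
  have unique: "c' = c" if "upper_covers L w c'" for c'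
  proof (rule ccontr)
    assume "c' \<noteq> c"
    then have "c \<squnion> c' = w" using upper_covers_join_eq[OF c that] by simp
    moreover have "c \<squnion> c' \<sqsubseteq> v"
      using below_v[OF c] below_v[OF that] c that v join_le[of c v c'] by (simp add: upper_covers_def)
    ultimately show False using w by simp
  qed
  have "c \<in> carrier L" using c by (simp add: upper_covers_def)
  then have "lower_covers_set L w = {c}" using c unique unfolding lower_covers_set_def by blast
  then show ?thesis using w unfolding join_irreducible_def by (intro exI[of _ w]) simp
qed

lemma ex_top: "carrier L \<noteq> {} \<Longrightarrow> \<exists>t\<in>carrier L. \<forall>y\<in>carrier L. y \<sqsubseteq> t"
  using finite_sup_least[OF finite_carrier] by (auto simp: least_def Upper_def)

lemma up_set_top: "t \<in> carrier L \<Longrightarrow> \<forall>y\<in>carrier L. y \<sqsubseteq> t \<Longrightarrow> up_set L t = {t}"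
  by (auto simp: up_set_def)

lemma card_up_set_add_le:
  assumes j: "j \<in> carrier L" and x: "x \<in> carrier L" and "\<not> j \<sqsubseteq> x" "\<not> x \<sqsubseteq> j"
    and "card (up_set L j \<inter> up_set L x) \<le> 1"
  shows "card (up_set L j) + card (up_set L x) \<le> card (carrier L)"
proof -
  have "j \<sqinter> x \<notin> up_set L j \<union> up_set L x"
    using assms meet_left[OF j x] meet_right[OF j x] le_trans[of j "j \<sqinter> x"] le_trans[of x "j \<sqinter> x"]
    by (auto simp: up_set_def)
  then have "up_set L j \<union> up_set L x \<subseteq> carrier L - {j \<sqinter> x}" by (auto simp: up_set_def)
  then have "card (up_set L j \<union> up_set L x) \<le> card (carrier L - {j \<sqinter> x})"
    using finite_carrier by (intro card_mono) auto
  also have "\<dots> = card (carrier L) - 1" using j x by simp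
  moreover have "finite (up_set L y)" for y using finite_carrier by (simp add: up_set_def)
  moreover have "card (carrier L) > 0" using finite_carrier j by (auto simp: card_gt_0_iff)
  ultimately show ?thesis using card_Un_Int[of "up_set L j" "up_set L x"] assms(5) by simp
qed

lemma up_set_chain_if_upper_covers_le_one:
  assumes x: "x \<in> carrier L"
    and covers: "\<And>w. w \<in> up_set L x \<Longrightarrow> card (upper_covers_set L w) \<le> 1"
    and y: "y \<in> up_set L x" and z: "z \<in> up_set L x"
  shows "y \<sqsubseteq> z \<or> z \<sqsubseteq> y"
proof (rule ccontr)
  assume incomparable: "\<not> (y \<sqsubseteq> z \<or> z \<sqsubseteq> y)"
  have yz: "y \<in> carrier L" "z \<in> carrier L" "x \<in> carrier L" "x \<sqsubseteq> y" "x \<sqsubseteq> z"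
    using x y z by (auto simp: up_set_def)
  define w where "w = y \<sqinter> z"
  have w: "w \<in> carrier L" "w \<sqsubseteq> y" "w \<sqsubseteq> z" "w \<in> up_set L x"
    using yz meet_left meet_right meet_le[of x y z] by (auto simp: w_def up_set_def)
  then have "w \<sqsubset> y" "w \<sqsubset> z" using incomparable by (auto simp: lless_eq)
  obtain w' where w': "upper_covers L w' w" "w' \<sqsubseteq> y"
    using ex_upper_cover_below[OF w(1) yz(1) \<open>w \<sqsubset> y\<close>] by blast
  have "w' \<in> upper_covers_set L w" using w' by (simp add: upper_covers_set_def upper_covers_def)
  moreover have "finite (upper_covers_set L w)" using finite_carrier by (simp add: upper_covers_set_def)
  ultimately have "upper_covers_set L w = {w'}"
    using covers[OF w(4)] by (auto simp: card_le_Suc0_iff_eq)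
  then have "w' \<sqsubseteq> z" using unique_upper_cover_le w(1) yz(2) \<open>w \<sqsubset> z\<close> by blast
  then have "w' \<sqsubseteq> w" using w' yz meet_le[of w' y z] by (simp add: w_def upper_covers_def)
  then show False using w' w(1) by (auto simp: upper_covers_def lless_eq)
qed

lemma counterexample_up_set_not_chain:
  assumes ce: "counterexample L" and x: "join_irreducible L x"
  shows "\<exists>y\<in>up_set L x. \<exists>z\<in>up_set L x. \<not> (y \<sqsubseteq> z \<or> z \<sqsubseteq> y)"
proof (rule ccontr)
  assume "\<not> ?thesis"
  then have chain: "y \<sqsubseteq> z \<or> z \<sqsubseteq> y" if "y \<in> up_set L x" "z \<in> up_set L x" for y z
    using that by blast
  have n: "card (carrier L) > 1"
    and large: "\<And>j. join_irreducible L j \<Longrightarrow> card (carrier L) < 2 * card (up_set L j)"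
    using ce by (auto simp: counterexample_def)
  have xc: "x \<in> carrier L" using x by (simp add: join_irreducible_def)
  obtain t where t: "t \<in> carrier L" "\<forall>y\<in>carrier L. y \<sqsubseteq> t" using ex_top xc by blast
  have not_top: "\<not> join_irreducible L t" using large[of t] n up_set_top[OF t] by auto
  then have "x \<noteq> t" using x by auto
  define S where "S = up_set L x - {t}"
  have "finite S" "S \<subseteq> carrier L" "x \<in> S"
    using finite_carrier xc \<open>x \<noteq> t\<close> by (auto simp: S_def up_set_def)
  then obtain v where v: "v \<in> S" and max: "\<forall>s\<in>S. v \<sqsubseteq> s \<longrightarrow> s = v"
    using finite_ex_maximal by blast
  have below_v: "s \<sqsubseteq> v" if "s \<in> S" for s
    using chain[of s v] max that v by (auto simp: S_def)
  have vc: "v \<in> carrier L" "v \<noteq> t" using v by (auto simp: S_def up_set_def)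
  then have "\<not> t \<sqsubseteq> v" using t le_antisym[of v t] by auto
  then obtain j where j: "join_irreducible L j" "\<not> j \<sqsubseteq> v"
    using ex_join_irreducible_le_not_le[OF t(1) vc(1)] by blast
  have jc: "j \<in> carrier L" using j by (simp add: join_irreducible_def)
  have "j \<noteq> t" using j not_top by auto
  have meet_top: "up_set L j \<inter> up_set L x \<subseteq> {t}"
  proof
    fix y assume y: "y \<in> up_set L j \<inter> up_set L x"
    show "y \<in> {t}"
    proof (rule ccontr)
      assume "y \<notin> {t}"
      then have "y \<sqsubseteq> v" using below_v y by (simp add: S_def)
      then show False using y j jc vc le_trans[of j y v] by (auto simp: up_set_def)
    qed
  qed
  have "card (up_set L j \<inter> up_set L x) \<le> 1" using card_mono[OF _ meet_top] by simp
  moreover have "\<not> j \<sqsubseteq> x" using below_v[OF \<open>x \<in> S\<close>] j jc xc vc le_trans[of j x v] by auto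
  moreover have "\<not> x \<sqsubseteq> j" using below_v[of j] j jc \<open>j \<noteq> t\<close> by (auto simp: S_def up_set_def)
  ultimately have "card (up_set L j) + card (up_set L x) \<le> card (carrier L)"
    using card_up_set_add_le jc xc by blast
  then show False using large[OF j(1)] large[OF x] by linarith
qed

lemma lower_covers_set_remove_element:
  assumes b: "upper_covers_set L x = {b}" and x: "x \<in> carrier L"
    and j: "j \<in> carrier L" "j \<noteq> x" "j \<noteq> b"
  shows "lower_covers_set (L\<lparr>carrier := carrier L - {x}\<rparr>) j = lower_covers_set L j"
proof
  show "lower_covers_set (L\<lparr>carrier := carrier L - {x}\<rparr>) j \<subseteq> lower_covers_set L j"
  proof
    fix q assume "q \<in> lower_covers_set (L\<lparr>carrier := carrier L - {x}\<rparr>) j"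
    then have q: "q \<in> carrier L" "q \<noteq> x" "q \<sqsubset> j"
      and gap: "\<not> (\<exists>z\<in>carrier L - {x}. q \<sqsubset> z \<and> z \<sqsubset> j)"
      by (auto simp: lower_covers_set_def upper_covers_def lless_def)
    have "\<not> (q \<sqsubset> x \<and> x \<sqsubset> j)"
    proof
      assume between: "q \<sqsubset> x \<and> x \<sqsubset> j"
      \<comment> \<open>then the unique upper cover b of x would lie strictly between q and j\<close>
      have bc: "b \<in> carrier L" "x \<sqsubset> b"
        using b by (auto simp: upper_covers_set_def upper_covers_def)
      have "b \<sqsubset> j" using unique_upper_cover_le[OF b x j(1)] between j(3) by (simp add: lless_eq)
      moreover have "q \<sqsubset> b" using between bc q x lless_trans by blast
      ultimately show False using gap bc between by (auto simp: lless_eq)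
    qed
    then show "q \<in> lower_covers_set L j"
      using q j gap by (auto simp: lower_covers_set_def upper_covers_def)
  qed
  show "lower_covers_set L j \<subseteq> lower_covers_set (L\<lparr>carrier := carrier L - {x}\<rparr>) j"
  proof
    fix q assume q: "q \<in> lower_covers_set L j"
    have "q \<noteq> x"
    proof
      assume "q = x"
      then have "j \<in> upper_covers_set L x" using q j by (simp add: lower_covers_set_def upper_covers_set_def)
      then show False using b j(3) by simp
    qed
    then show "q \<in> lower_covers_set (L\<lparr>carrier := carrier L - {x}\<rparr>) j"
      using q j by (auto simp: lower_covers_set_def upper_covers_def lless_def)
  qed
qed

lemma up_set_remove_more_than_half:
  assumes ce: "counterexample L" and x: "doubly_irreducible L x"
    and b: "upper_covers_set L x = {b}"
    and j: "join_irreducible (L\<lparr>carrier := carrier L - {x}\<rparr>) j" "j \<noteq> b"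
  shows "card (carrier L) < 2 * card (up_set (L\<lparr>carrier := carrier L - {x}\<rparr>) j)"
proof -
  have large: "\<And>j. join_irreducible L j \<Longrightarrow> card (carrier L) < 2 * card (up_set L j)"
    using ce by (auto simp: counterexample_def)
  have xc: "x \<in> carrier L" and x_ji: "join_irreducible L x"
    using x by (auto simp: doubly_irreducible_def join_irreducible_def)
  have jc: "j \<in> carrier L" "j \<noteq> x" using j by (auto simp: join_irreducible_def)
  have "join_irreducible L j"
    using j lower_covers_set_remove_element[OF b xc jc \<open>j \<noteq> b\<close>] by (simp add: join_irreducible_def)
  have up_remove: "up_set (L\<lparr>carrier := carrier L - {x}\<rparr>) y = up_set L y - {x}" for y
    by (auto simp: up_set_def)
  have fin_up: "finite (up_set L y)" for y using finite_carrier by (simp add: up_set_def)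
  show ?thesis
  proof (cases "j \<sqsubseteq> x")
    case False
    then have "x \<notin> up_set L j" by (simp add: up_set_def)
    then show ?thesis using large[OF \<open>join_irreducible L j\<close>] up_remove by simp
  next
    case True
    have "insert j (up_set L x - {x}) \<subseteq> up_set (L\<lparr>carrier := carrier L - {x}\<rparr>) j"
      using True jc xc le_trans[of j x] by (auto simp: up_set_def)
    then have "card (insert j (up_set L x - {x})) \<le> card (up_set (L\<lparr>carrier := carrier L - {x}\<rparr>) j)"
      using fin_up up_remove by (intro card_mono) auto
    moreover have "card (insert j (up_set L x - {x})) = card (up_set L x)"
    proof -
      have "j \<notin> up_set L x" "x \<in> up_set L x"
        using True jc xc le_antisym[of j x] by (auto simp: up_set_def)
      then have "card (insert j (up_set L x - {x})) = Suc (card (up_set L x - {x}))"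
        using fin_up by (intro card_insert_disjoint) auto
      also have "\<dots> = card (up_set L x)" using card_Suc_Diff1[OF fin_up \<open>x \<in> up_set L x\<close>] .
      finally show ?thesis .
    qed
    ultimately show ?thesis using large[OF x_ji] by simp
  qed
qed

lemma up_set_upper_cover_less_than_half:
  assumes ce: "counterexample L" and x: "doubly_irreducible L x"
    and b: "upper_covers_set L x = {b}"
    and smaller: "\<not> counterexample (L\<lparr>carrier := carrier L - {x}\<rparr>)"
  shows "2 * card (up_set L b) < card (carrier L)"
proof -
  let ?L' = "L\<lparr>carrier := carrier L - {x}\<rparr>"
  have xc: "x \<in> carrier L" using x by (simp add: doubly_irreducible_def join_irreducible_def)
  obtain a where a: "lower_covers_set L x = {a}"
    using x card_1_singletonE unfolding doubly_irreducible_def join_irreducible_def by metis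
  have "a \<sqsubset> x" "x \<sqsubset> b" "a \<in> carrier L" "b \<in> carrier L"
    using a b by (auto simp: lower_covers_set_def upper_covers_set_def upper_covers_def)
  then have "{a, b} \<subseteq> carrier ?L'" "a \<noteq> b"
    using xc lless_trans[of a x b] by (auto simp: lless_eq)
  then have "card (carrier ?L') > 1"
    using card_mono[of "carrier ?L'" "{a, b}"] finite_carrier by simp
  moreover have "lattice ?L'" using lattice_remove_doubly_irreducible[OF x] .
  moreover have "finite (carrier ?L')" using finite_carrier by simp
  ultimately obtain j where j: "join_irreducible ?L' j"
    and "\<not> card (carrier ?L') < 2 * card (up_set ?L' j)"
    using smaller by (auto simp: counterexample_def)
  moreover have "card (carrier ?L') = card (carrier L) - 1" using xc finite_carrier by simp
  moreover have "card (carrier L) > 1" using ce by (simp add: counterexample_def)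
  ultimately have "2 * card (up_set ?L' j) < card (carrier L)" by linarith
  then have "j = b" using up_set_remove_more_than_half[OF ce x b j] by force
  moreover have "x \<notin> up_set L b"
    using \<open>x \<sqsubset> b\<close> \<open>b \<in> carrier L\<close> xc le_antisym[of x b] by (auto simp: up_set_def lless_eq)
  then have "up_set ?L' b = up_set L b" by (auto simp: up_set_def)
  ultimately show ?thesis using \<open>2 * card (up_set ?L' j) < card (carrier L)\<close> by simp
qed

lemma join_reducible_above:
  assumes ce: "counterexample L" and b: "upper_covers_set L x = {b}"
    and small: "2 * card (up_set L b) < card (carrier L)"
    and x: "x \<in> carrier L" and y: "y \<in> carrier L" "x \<sqsubset> y"
  shows "join_reducible L y"
proof -
  have "\<not> join_irreducible L y"
  proof
    assume "join_irreducible L y"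
    then have "card (carrier L) < 2 * card (up_set L y)" using ce by (simp add: counterexample_def)
    moreover have "b \<in> carrier L" using b by (auto simp: upper_covers_set_def)
    then have "up_set L y \<subseteq> up_set L b"
      using unique_upper_cover_le[OF b x y] le_trans[of b y] y by (auto simp: up_set_def)
    then have "card (up_set L y) \<le> card (up_set L b)"
      using finite_carrier by (intro card_mono) (auto simp: up_set_def)
    ultimately show False using small by simp
  qed
  moreover obtain c where "upper_covers L y c" using ex_lower_cover_above[OF x y] by blast
  then have "lower_covers_set L y \<noteq> {}" by (auto simp: lower_covers_set_def upper_covers_def)
  then have "card (lower_covers_set L y) > 0"
    using finite_carrier by (simp add: lower_covers_set_def card_gt_0_iff)
  ultimately show ?thesis using y by (auto simp: join_irreducible_def join_reducible_def)
qed

end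

definition pullback_order :: "('c \<Rightarrow> 'a) \<Rightarrow> 'c set \<Rightarrow> ('a, 'b) gorder_scheme \<Rightarrow> 'c gorder" where
  "pullback_order g A K = \<lparr>carrier = A, eq = (=), le = (\<lambda>u v. g u \<sqsubseteq>\<^bsub>K\<^esub> g v)\<rparr>"

lemma carrier_pullback_order [simp]: "carrier (pullback_order g A K) = A"
  by (simp add: pullback_order_def)

context
  fixes g :: "'c \<Rightarrow> 'a" and A :: "'c set" and K :: "('a, 'b) gorder_scheme"
  assumes bij: "bij_betw g A (carrier K)" and K: "partial_order K"
begin

lemma partial_order_pullback_order: "partial_order (pullback_order g A K)"
proof -
  interpret K: partial_order K by (rule K)
  have antisym: "x = y" if "g x \<sqsubseteq>\<^bsub>K\<^esub> g y" "g y \<sqsubseteq>\<^bsub>K\<^esub> g x" "x \<in> A" "y \<in> A" for x y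
  proof -
    have "g x \<in> carrier K" "g y \<in> carrier K" using bij that(3,4) by (auto simp: bij_betw_def)
    then have "g x = g y" using that(1,2) by (rule K.le_antisym[rotated 2])
    then show ?thesis using bij that(3,4) by (auto simp: bij_betw_def inj_on_def)
  qed
  have "g x \<in> carrier K" if "x \<in> A" for x using bij that by (auto simp: bij_betw_def)
  then show ?thesis
    by unfold_locales (auto simp: pullback_order_def intro: K.le_trans antisym)
qed

lemma lless_pullback_order:
  "u \<in> A \<Longrightarrow> v \<in> A \<Longrightarrow> u \<sqsubset>\<^bsub>pullback_order g A K\<^esub> v \<longleftrightarrow> g u \<sqsubset>\<^bsub>K\<^esub> g v"
  using bij partial_order.lless_eq[OF K]
  by (auto simp: lless_def pullback_order_def bij_betw_def inj_on_def)

lemma upper_covers_pullback_order: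
  assumes "u \<in> A" "v \<in> A"
  shows "upper_covers (pullback_order g A K) u v \<longleftrightarrow> upper_covers K (g u) (g v)"
proof -
  have "(\<exists>z\<in>A. v \<sqsubset>\<^bsub>pullback_order g A K\<^esub> z \<and> z \<sqsubset>\<^bsub>pullback_order g A K\<^esub> u) \<longleftrightarrow>
        (\<exists>z\<in>carrier K. g v \<sqsubset>\<^bsub>K\<^esub> z \<and> z \<sqsubset>\<^bsub>K\<^esub> g u)"
    using assms lless_pullback_order by (simp add: bij_betw_imp_surj_on[OF bij, symmetric])
  then show ?thesis
    using assms bij lless_pullback_order by (auto simp: upper_covers_def pullback_order_def bij_betw_def)
qed

lemma lower_covers_set_pullback_order:
  "u \<in> A \<Longrightarrow> lower_covers_set K (g u) = g ` lower_covers_set (pullback_order g A K) u"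
  using upper_covers_pullback_order
  by (auto simp: lower_covers_set_def pullback_order_def bij_betw_imp_surj_on[OF bij, symmetric])

lemma up_set_pullback_order:
  "u \<in> A \<Longrightarrow> up_set K (g u) = g ` up_set (pullback_order g A K) u"
  by (auto simp: up_set_def pullback_order_def bij_betw_imp_surj_on[OF bij, symmetric])

lemma lattice_pullback_order:
  assumes "lattice K"
  shows "lattice (pullback_order g A K)"
proof -
  interpret K: lattice K by (rule assms)
  interpret P: partial_order "pullback_order g A K" by (rule partial_order_pullback_order)
  have surj: "g ` A = carrier K" using bij by (rule bij_betw_imp_surj_on)
  show ?thesis
  proof unfold_locales
    fix x y assume "x \<in> carrier (pullback_order g A K)" "y \<in> carrier (pullback_order g A K)"
    then have xy: "x \<in> A" "y \<in> A" "g x \<in> carrier K" "g y \<in> carrier K"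
      using surj by (auto simp: pullback_order_def)
    obtain s where s: "s \<in> A" "g s = g x \<squnion>\<^bsub>K\<^esub> g y"
      using K.join_closed[OF xy(3,4)] surj by (metis imageE)
    show "\<exists>s. least (pullback_order g A K) s (Upper (pullback_order g A K) {x, y})"
      using xy s bij_betw_apply[OF bij] K.join_left K.join_right K.join_le
      by (intro exI[of _ s]) (auto simp: least_def Upper_def pullback_order_def)
    obtain i where i: "i \<in> A" "g i = g x \<sqinter>\<^bsub>K\<^esub> g y"
      using K.meet_closed[OF xy(3,4)] surj by (metis imageE)
    show "\<exists>i. greatest (pullback_order g A K) i (Lower (pullback_order g A K) {x, y})"
      using xy i bij_betw_apply[OF bij] K.meet_left K.meet_right K.meet_le
      by (intro exI[of _ i]) (auto simp: greatest_def Lower_def pullback_order_def)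
  qed
qed

lemma counterexample_pullback_order:
  assumes "counterexample K"
  shows "counterexample (pullback_order g A K)"
proof -
  have inj: "inj_on g B" if "B \<subseteq> A" for B using bij that by (auto simp: bij_betw_def intro: inj_on_subset)
  have "join_irreducible K (g j)" if "join_irreducible (pullback_order g A K) j" for j
    using that lower_covers_set_pullback_order inj[of "lower_covers_set (pullback_order g A K) j"]
      bij_betw_apply[OF bij]
    by (auto simp: join_irreducible_def card_image lower_covers_set_def pullback_order_def)
  moreover have "card (up_set K (g j)) = card (up_set (pullback_order g A K) j)" if "j \<in> A" for j
    using that up_set_pullback_order inj[of "up_set (pullback_order g A K) j"]
    by (simp add: card_image up_set_def pullback_order_def)
  ultimately show ?thesis
    using assms lattice_pullback_order bij_betw_same_card[OF bij] bij_betw_finite[OF bij]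
    unfolding counterexample_def by (metis carrier_pullback_order join_irreducible_def)
qed

end

lemma ex_nat_counterexample:
  assumes "counterexample K"
  shows "\<exists>M :: nat gorder. counterexample M \<and> card (carrier M) = card (carrier K)"
proof -
  have "finite (carrier K)" "partial_order K"
    using assms by (auto simp: counterexample_def lattice_def upper_semilattice_def)
  then obtain g where g: "bij_betw g {0..<card (carrier K)} (carrier K)"
    using ex_bij_betw_nat_finite by blast
  show ?thesis
    using counterexample_pullback_order[OF g \<open>partial_order K\<close> assms]
    by (intro exI[of _ "pullback_order g {0..<card (carrier K)} K"]) (simp add: pullback_order_def)
qed

lemma min_counterexample_card_le:
  "min_counterexample L \<Longrightarrow> counterexample K \<Longrightarrow> card (carrier L) \<le> card (carrier K)"
  using ex_nat_counterexample by (fastforce simp: min_counterexample_def)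

theorem corollary2p8:
  fixes L :: "('a, 'b) gorder_scheme"
  assumes "min_counterexample L"
  shows "\<forall>x. doubly_irreducible L x \<longrightarrow>
           (\<exists>y. doubly_reducible L y \<and> x \<sqsubset>\<^bsub>L\<^esub> y)"
proof (intro allI impI)
  fix x assume x: "doubly_irreducible L x"
  have ce: "counterexample L" using assms by (simp add: min_counterexample_def)
  interpret finite_lattice L
    using ce by (simp add: counterexample_def finite_lattice_def finite_lattice_axioms_def)
  have xc: "x \<in> carrier L" and x_ji: "join_irreducible L x"
    using x by (auto simp: doubly_irreducible_def join_irreducible_def)
  obtain b where b: "upper_covers_set L x = {b}"
    using x card_1_singletonE unfolding doubly_irreducible_def meet_irreducible_def by metis
  have "\<not> counterexample (L\<lparr>carrier := carrier L - {x}\<rparr>)"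
    using min_counterexample_card_le[OF assms] xc finite_carrier ce by (fastforce simp: counterexample_def)
  then have small: "2 * card (up_set L b) < card (carrier L)"
    using up_set_upper_cover_less_than_half[OF ce x b] by blast
  show "\<exists>y. doubly_reducible L y \<and> x \<sqsubset>\<^bsub>L\<^esub> y"
  proof (rule ccontr)
    assume none: "\<not> ?thesis"
    have "card (upper_covers_set L w) \<le> 1" if "w \<in> up_set L x" for w
    proof (cases "w = x")
      case False
      then have "x \<sqsubset>\<^bsub>L\<^esub> w" "w \<in> carrier L" using that by (auto simp: up_set_def lless_eq)
      then have "join_reducible L w" using join_reducible_above[OF ce b small xc] by blast
      then show ?thesis using none \<open>x \<sqsubset>\<^bsub>L\<^esub> w\<close> \<open>w \<in> carrier L\<close>
        unfolding doubly_reducible_def meet_reducible_def by (meson not_le)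
    qed (use b in simp)
    then show False
      using counterexample_up_set_not_chain[OF ce x_ji] up_set_chain_if_upper_covers_le_one[OF xc] by blast
  qed
qed

end
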